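(* Let $N\ge4$, $n=N-1$, $\epsilon>0$, let $\pi=(\pi_{ij})$ be a trace-free symmetric real $n\times n$ matrix, and let $a_1,a_2\in\mathbb{R}$. Define on $\mathbb{R}^N_+$ \[\Phi(x)=\frac{\epsilon\,\pi_{ij}x_ix_j}{(|\bar x|^2+(x_N+1)^2)^{\frac N2}}\Big[\Big(\frac{N-2}{2}\Big)(x_N-1)+\frac{a_1(x_N+1)}{(|\bar x|^2+(x_N+1)^2)^2}+\frac{a_2}{|\bar x|^2+(x_N+1)^2}\Big].\] Then $-\Delta\Phi=2\epsilon\,\pi_{ij}\,x_N\,\partial_{ij}W_{1,0}$ in $\mathbb{R}^N_+$.
   Context: $\mathbb{R}^N_+=\{x=(\bar x,x_N):\bar x\in\mathbb{R}^n,\ x_N>0\}$. $W_{1,0}(x)=(|\bar x|^2+(x_N+1)^2)^{-\frac{N-2}{2}}$. Repeated indices $i,j$ are summed from $1$ to $n$. *)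

theory Defs
  imports "HOL-Analysis.Analysis"
begin

text \<open>Points of the half-space R^N_+ are pairs (xbar, xN) with xbar in R^n, n = CARD('n),
  N = n + 1.\<close>

definition pdiff :: "('a::real_normed_vector \<Rightarrow> real) \<Rightarrow> 'a \<Rightarrow> 'a \<Rightarrow> real" where
  "pdiff f e x = deriv (\<lambda>t. f (x + t *\<^sub>R e)) 0"

definition laplacian :: "('a::euclidean_space \<Rightarrow> real) \<Rightarrow> 'a \<Rightarrow> real" where
  "laplacian f x = (\<Sum>b\<in>Basis. pdiff (\<lambda>y. pdiff f b y) b x)"

definition ebar :: "'n::finite \<Rightarrow> (real^'n) \<times> real" where
  "ebar i = (axis i 1, 0)"

definition W10 :: "(real^'n::finite) \<times> real \<Rightarrow> real" where
  "W10 x = (norm (fst x) ^ 2 + (snd x + 1) ^ 2) powr (- ((real CARD('n) + 1) - 2) / 2)"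

definition Phi :: "real \<Rightarrow> real^'n^'n \<Rightarrow> real \<Rightarrow> real \<Rightarrow> (real^'n::finite) \<times> real \<Rightarrow> real" where
  "Phi \<epsilon> \<pi> a1 a2 x =
     (let N = (real CARD('n) + 1); xb = fst x; xN = snd x;
          \<rho> = norm xb ^ 2 + (xN + 1) ^ 2 in
      \<epsilon> * (\<Sum>i\<in>UNIV. \<Sum>j\<in>UNIV. \<pi> $ i $ j * xb $ i * xb $ j) / \<rho> powr (N / 2)
        * ((N - 2) / 2 * (xN - 1) + a1 * (xN + 1) / \<rho> ^ 2 + a2 / \<rho>))"

end

theory Submission
  imports Defs
begin

text \<open>Write Phi = Q(xbar) g(|xbar|^2, xN) with Q(xbar) = pi_ij x_i x_j. Since Q is a trace-free
  quadratic form, Euler's identity xbar . grad Q = 2 Q gives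
  Delta (Q g) = Q (4 r g_rr + (2n + 8) g_r + g_NN) with r = |xbar|^2. The profile g is a sum of
  terms rho^beta (c xN + d), rho = r + (xN + 1)^2, on which this operator yields
  2 beta rho^(beta - 1) ((2 beta + N + 2)(c xN + d) + 2 c (xN + 1)). This vanishes for the
  a1-term (beta = -N/2 - 2, c = d) and for the a2-term (beta = -N/2 - 1, c = 0), so only
  -2 eps N (N - 2) xN rho^(-N/2 - 1) Q survives. On the other side pi_ij d_ij W = 4 W''(r) Q,
  again by trace-freeness, which is the same expression.\<close>

definition quadform :: "real^'n::finite^'n \<Rightarrow> real^'n \<Rightarrow> real" where
  "quadform A x = (\<Sum>i\<in>UNIV. \<Sum>j\<in>UNIV. A $ i $ j * x $ i * x $ j)"

lemma norm_add_scaleR_axis_power2: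
  fixes x :: "real^'n::finite"
  shows "norm (x + t *\<^sub>R axis i 1)^2 = norm x^2 + 2*t*x$i + t^2"
  unfolding power2_norm_eq_inner
  by (simp add: inner_add_left inner_add_right inner_axis inner_commute algebra_simps power2_eq_square)

lemma quadform_add_scaleR_axis:
  "quadform A (x + t *\<^sub>R axis i 1)
     = quadform A x + t * ((A *v x)$i + (transpose A *v x)$i) + t^2 * A$i$i"
proof -
  have expand: "A$k$l * (x + t *\<^sub>R axis i 1)$k * (x + t *\<^sub>R axis i 1)$l
      = A$k$l * x$k * x$l + (if l = i then t * (A$k$l * x$k) else 0)
        + (if k = i then t * (A$k$l * x$l) else 0)
        + (if k = i then if l = i then t^2 * A$k$l else 0 else 0)" for k l
    by (simp add: axis_def algebra_simps power2_eq_square)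
  have if_out: "(\<Sum>l\<in>UNIV. if P then f l else 0) = (if P then \<Sum>l\<in>UNIV. f l else 0)"
    for P and f :: "'n \<Rightarrow> real"
    by simp
  show ?thesis
    unfolding quadform_def expand
    by (simp add: if_out matrix_vector_mult_def transpose_def sum.distrib sum_distrib_left
        algebra_simps)
qed

lemma sum_component_mult_quadform_gradient:
  "(\<Sum>i\<in>UNIV. x$i * ((A *v x)$i + (transpose A *v x)$i)) = 2 * quadform A x"
proof -
  have "(\<Sum>i\<in>UNIV. x$i * (transpose A *v x)$i) = (\<Sum>i\<in>UNIV. \<Sum>j\<in>UNIV. A$j$i * x$j * x$i)"
    by (simp add: matrix_vector_mult_def transpose_def sum_distrib_left mult_ac)
  also have "\<dots> = quadform A x"
    unfolding quadform_def by (rule sum.swap)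
  finally have "(\<Sum>i\<in>UNIV. x$i * (transpose A *v x)$i) = quadform A x" .
  moreover have "(\<Sum>i\<in>UNIV. x$i * (A *v x)$i) = quadform A x"
    by (simp add: quadform_def matrix_vector_mult_def sum_distrib_left mult_ac)
  ultimately show ?thesis
    by (simp add: distrib_left sum.distrib)
qed

lemma deriv2_eqI:
  fixes f :: "real \<Rightarrow> real"
  assumes "\<forall>\<^sub>F y in nhds x. (f has_real_derivative f' y) (at y)"
    and "(f' has_real_derivative f'') (at x)"
  shows "deriv (deriv f) x = f''"
proof -
  have "\<forall>\<^sub>F y in nhds x. deriv f y = f' y"
    using assms(1) by (rule eventually_mono) (rule DERIV_imp_deriv)
  then have "deriv (deriv f) x = deriv f' x"
    by (rule deriv_cong_ev) simp
  also have "\<dots> = f''"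
    using assms(2) by (rule DERIV_imp_deriv)
  finally show ?thesis .
qed

lemma DERIV_comp_quadratic:
  fixes G :: "real \<Rightarrow> real"
  assumes "(G has_real_derivative D) (at (s + 2*t*a + t^2))"
  shows "((\<lambda>t. G (s + 2*t*a + t^2)) has_real_derivative D * (2*a + 2*t)) (at t)"
proof -
  have "((\<lambda>t. s + 2*t*a + t^2) has_real_derivative 2*a + 2*t) (at t)"
    by (rule derivative_eq_intros refl | simp)+
  with assms show ?thesis
    by (rule DERIV_chain2)
qed

lemma deriv2_quadratic_mult_comp:
  fixes G G' G'' :: "real \<Rightarrow> real"
  assumes nonneg: "\<And>t. 0 \<le> s + 2*t*a + t^2"
    and G: "\<And>p. 0 \<le> p \<Longrightarrow> (G has_real_derivative G' p) (at p)"
    and G': "\<And>p. 0 \<le> p \<Longrightarrow> (G' has_real_derivative G'' p) (at p)"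
  shows "deriv (deriv (\<lambda>t. (q + t*c + t^2*d) * G (s + 2*t*a + t^2))) 0
       = 2*d*G s + 4*a*c*G' s + q*(4*a^2*G'' s + 2*G' s)"
proof -
  define \<rho> where "\<rho> t = s + 2*t*a + t^2" for t
  have G\<rho>: "((\<lambda>t. G (\<rho> t)) has_real_derivative G' (\<rho> t) * (2*a + 2*t)) (at t)"
    and G'\<rho>: "((\<lambda>t. G' (\<rho> t)) has_real_derivative G'' (\<rho> t) * (2*a + 2*t)) (at t)" for t
    unfolding \<rho>_def using G G' nonneg by (simp_all add: DERIV_comp_quadratic)
  have "deriv (deriv (\<lambda>t. (q + t*c + t^2*d) * G (\<rho> t))) 0
      = 2*d*G (\<rho> 0) + 4*a*c*G' (\<rho> 0) + q*(4*a^2*G'' (\<rho> 0) + 2*G' (\<rho> 0))"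
  proof (rule deriv2_eqI)
    show "\<forall>\<^sub>F t in nhds 0. ((\<lambda>t. (q + t*c + t^2*d) * G (\<rho> t)) has_real_derivative
        (c + 2*t*d) * G (\<rho> t) + (q + t*c + t^2*d) * (G' (\<rho> t) * (2*a + 2*t))) (at t)"
      by (intro always_eventually allI) (rule derivative_eq_intros G\<rho> refl | simp)+
    show "((\<lambda>t. (c + 2*t*d) * G (\<rho> t) + (q + t*c + t^2*d) * (G' (\<rho> t) * (2*a + 2*t)))
        has_real_derivative 2*d*G (\<rho> 0) + 4*a*c*G' (\<rho> 0) + q*(4*a^2*G'' (\<rho> 0) + 2*G' (\<rho> 0))) (at 0)"
      by (rule derivative_eq_intros G\<rho> G'\<rho> refl | simp)+
        (simp add: algebra_simps power2_eq_square)
  qed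
  then show ?thesis
    by (simp add: \<rho>_def)
qed

lemma DERIV_translate_cmult:
  fixes f :: "real \<Rightarrow> real"
  assumes "(f has_real_derivative D) (at (v + t))"
  shows "((\<lambda>t. c * f (v + t)) has_real_derivative c * D) (at t)"
  using DERIV_cmult[OF assms[unfolded add.commute[of v] DERIV_shift]] by (simp add: add.commute)

lemma pdiff_pdiff_self:
  "pdiff (pdiff f b) b x = deriv (deriv (\<lambda>t. f (x + t *\<^sub>R b))) 0"
proof -
  have "pdiff f b (x + t *\<^sub>R b) = deriv (\<lambda>t. f (x + t *\<^sub>R b)) t" for t
  proof -
    have "deriv (\<lambda>t. f (x + t *\<^sub>R b)) t = deriv ((\<lambda>t. f (x + t *\<^sub>R b)) \<circ> (\<lambda>s. t + s)) 0"
      by (rule deriv_shift_0)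
    then show ?thesis
      by (simp add: pdiff_def o_def scaleR_add_left add.assoc)
  qed
  then show ?thesis
    by (simp add: pdiff_def)
qed

lemma laplacian_prod_vec:
  fixes f :: "(real^'n::finite) \<times> real \<Rightarrow> real"
  shows "laplacian f x = (\<Sum>i\<in>UNIV. pdiff (pdiff f (ebar i)) (ebar i) x) + pdiff (pdiff f (0, 1)) (0, 1) x"
proof -
  have Basis_eq: "(Basis :: ((real^'n) \<times> real) set) = range ebar \<union> {(0, 1)}"
    by (auto simp: Basis_prod_def Basis_vec_def ebar_def)
  have inj: "inj (ebar :: 'n \<Rightarrow> _)"
    by (auto intro: injI simp: ebar_def axis_eq_axis)
  have "(0, 1) \<notin> range (ebar :: 'n \<Rightarrow> _)"
    by (auto simp: ebar_def)
  then show ?thesis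
    unfolding laplacian_def Basis_eq by (simp add: sum.reindex[OF inj])
qed

lemma laplacian_quadform_mult_profile:
  fixes A :: "real^'n::finite^'n" and g :: "real \<Rightarrow> real \<Rightarrow> real"
  assumes "trace A = 0"
    and dr: "\<And>p. 0 \<le> p \<Longrightarrow> ((\<lambda>p. g p v) has_real_derivative g_r p) (at p)"
    and drr: "\<And>p. 0 \<le> p \<Longrightarrow> (g_r has_real_derivative g_rr p) (at p)"
    and dw: "\<forall>\<^sub>F w in nhds v. (g (norm y^2) has_real_derivative g_w w) (at w)"
    and dww: "(g_w has_real_derivative g_ww) (at v)"
  shows "laplacian (\<lambda>z. quadform A (fst z) * g (norm (fst z)^2) (snd z)) (y, v)
    = quadform A y * (4 * norm y^2 * g_rr (norm y^2) + (2 * real CARD('n) + 8) * g_r (norm y^2) + g_ww)"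
proof -
  define u where "u z = quadform A (fst z) * g (norm (fst z)^2) (snd z)" for z
  define r where "r = norm y^2"
  define c where "c i = (A *v y)$i + (transpose A *v y)$i" for i
  have tangential: "pdiff (pdiff u (ebar i)) (ebar i) (y, v)
      = 2*A$i$i*g r v + 4*y$i*c i*g_r r + quadform A y*(4*(y$i)^2*g_rr r + 2*g_r r)" for i
  proof -
    have line: "(\<lambda>t. u ((y, v) + t *\<^sub>R ebar i))
        = (\<lambda>t. (quadform A y + t*c i + t^2*A$i$i) * g (r + 2*t*y$i + t^2) v)"
      by (simp add: u_def ebar_def c_def r_def quadform_add_scaleR_axis norm_add_scaleR_axis_power2)
    have nonneg: "0 \<le> r + 2*t*y$i + t^2" for t
      unfolding r_def norm_add_scaleR_axis_power2[symmetric] by simp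
    show ?thesis
      unfolding pdiff_pdiff_self line
      by (rule deriv2_quadratic_mult_comp[where G = "\<lambda>p. g p v", OF nonneg dr drr])
  qed
  have normal: "pdiff (pdiff u (0, 1)) (0, 1) (y, v) = quadform A y * g_ww"
  proof -
    have "(\<lambda>t. u ((y, v) + t *\<^sub>R (0, 1))) = (\<lambda>t. quadform A y * g r (v + t))"
      by (simp add: u_def r_def)
    moreover have "deriv (deriv (\<lambda>t. quadform A y * g r (v + t))) 0 = quadform A y * g_ww"
    proof (rule deriv2_eqI)
      have "filterlim (\<lambda>t. v + t) (nhds v) (nhds 0)"
        using tendsto_add[OF tendsto_const[of v] filterlim_ident[of "nhds 0"]] by simp
      with dw have "\<forall>\<^sub>F t in nhds 0. (g r has_real_derivative g_w (v + t)) (at (v + t))"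
        unfolding r_def by (rule eventually_compose_filterlim)
      then show "\<forall>\<^sub>F t in nhds 0.
          ((\<lambda>t. quadform A y * g r (v + t)) has_real_derivative quadform A y * g_w (v + t)) (at t)"
        by (rule eventually_mono) (rule DERIV_translate_cmult)
      show "((\<lambda>t. quadform A y * g_w (v + t)) has_real_derivative quadform A y * g_ww) (at 0)"
        using dww by (intro DERIV_translate_cmult) simp
    qed
    ultimately show ?thesis
      unfolding pdiff_pdiff_self by simp
  qed
  have "(\<Sum>i\<in>UNIV. pdiff (pdiff u (ebar i)) (ebar i) (y, v))
      = 2 * trace A * g r v + 4*g_r r*(\<Sum>i\<in>UNIV. y$i * c i)
        + quadform A y*(4*g_rr r*(\<Sum>i\<in>UNIV. (y$i)^2) + 2*g_r r*real CARD('n))"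
    by (simp add: tangential trace_def sum.distrib sum_distrib_left distrib_left mult_ac)
  also have "(\<Sum>i\<in>UNIV. y$i * c i) = 2 * quadform A y"
    unfolding c_def by (rule sum_component_mult_quadform_gradient)
  also have "(\<Sum>i\<in>UNIV. (y$i)^2) = r"
    unfolding r_def power2_norm_eq_inner by (simp add: inner_vec_def power2_eq_square)
  finally have "(\<Sum>i\<in>UNIV. pdiff (pdiff u (ebar i)) (ebar i) (y, v))
      = quadform A y * (4 * r * g_rr r + (2 * real CARD('n) + 8) * g_r r)"
    using assms(1) by (simp add: algebra_simps)
  then show ?thesis
    unfolding u_def[abs_def, symmetric] laplacian_prod_vec normal r_def
    by (simp add: algebra_simps)
qed

text \<open>Here r stands for |xbar|^2 and w for xN.\<close>

definition rho_term :: "real \<Rightarrow> real \<Rightarrow> real \<Rightarrow> real \<Rightarrow> real \<Rightarrow> real" where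
  "rho_term \<beta> c d r w = (r + (w + 1)^2) powr \<beta> * (c * w + d)"

lemma rho_term_has_derivative_r:
  assumes "0 < r + (w + 1)^2"
  shows "((\<lambda>r. rho_term \<beta> c d r w) has_real_derivative \<beta> * rho_term (\<beta> - 1) c d r w) (at r)"
  unfolding rho_term_def
  by (rule derivative_eq_intros refl | simp add: assms powr_diff)+

lemma rho_term_has_derivative_w:
  assumes "0 < r + (w + 1)^2"
  shows "((\<lambda>w. rho_term \<beta> c d r w) has_real_derivative
      2*\<beta>*(w + 1) * rho_term (\<beta> - 1) c d r w + rho_term \<beta> 0 c r w) (at w)"
  unfolding rho_term_def
  by (rule derivative_eq_intros refl | simp add: assms)+

lemma rho_term_has_second_derivative_w:
  assumes "0 < r + (w + 1)^2"
  shows "((\<lambda>w. 2*\<beta>*(w + 1) * rho_term (\<beta> - 1) c d r w + rho_term \<beta> 0 c r w) has_real_derivative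
      2*\<beta> * rho_term (\<beta> - 1) c d r w + 4*\<beta>*(\<beta> - 1)*(w + 1)^2 * rho_term (\<beta> - 2) c d r w
        + 4*\<beta>*(w + 1) * rho_term (\<beta> - 1) 0 c r w) (at w)"
  by (rule derivative_eq_intros rho_term_has_derivative_w refl | simp add: assms)+
    (simp add: rho_term_def algebra_simps power2_eq_square)

lemma rho_term_radial_identity:
  assumes "0 < r + (w + 1)^2"
  shows "4*r*(\<beta>*((\<beta> - 1) * rho_term (\<beta> - 2) c d r w)) + (2*n + 8)*(\<beta> * rho_term (\<beta> - 1) c d r w)
      + (2*\<beta> * rho_term (\<beta> - 1) c d r w + 4*\<beta>*(\<beta> - 1)*(w + 1)^2 * rho_term (\<beta> - 2) c d r w
        + 4*\<beta>*(w + 1) * rho_term (\<beta> - 1) 0 c r w)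
    = 2*\<beta>*((2*\<beta> + n + 3)*(c*w + d) + 2*c*(w + 1)) * (r + (w + 1)^2) powr (\<beta> - 1)"
proof -
  define \<rho> where "\<rho> = r + (w + 1)^2"
  have "\<rho> powr (\<beta> - 1) = \<rho> powr (\<beta> - 2) * \<rho> powr 1"
    unfolding powr_add[symmetric] by simp
  then have lower: "\<rho> powr (\<beta> - 1) = \<rho> * \<rho> powr (\<beta> - 2)"
    using assms by (simp add: \<rho>_def)
  show ?thesis
    unfolding rho_term_def \<rho>_def[symmetric] lower unfolding \<rho>_def by algebra
qed

lemma laplacian_quadform_mult_rho_terms:
  fixes A :: "real^'n::finite^'n" and T :: "(real \<times> real \<times> real) set"
  assumes "trace A = 0" and "finite T" and "-1 < v"
  shows "laplacian (\<lambda>z. quadform A (fst z) * (\<Sum>(\<beta>, c, d)\<in>T. rho_term \<beta> c d (norm (fst z)^2) (snd z))) (y, v)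
    = quadform A y * (\<Sum>(\<beta>, c, d)\<in>T.
        2*\<beta>*((2*\<beta> + real CARD('n) + 3)*(c * v + d) + 2*c*(v + 1)) * (norm y^2 + (v + 1)^2) powr (\<beta> - 1))"
proof -
  define r where "r = norm y^2"
  have pos: "0 < p + (w + 1)^2" if "0 \<le> p" "-1 < w" for p w :: real
    using that by (auto intro!: add_nonneg_pos)
  have "laplacian (\<lambda>z. quadform A (fst z) * (\<Sum>(\<beta>, c, d)\<in>T. rho_term \<beta> c d (norm (fst z)^2) (snd z))) (y, v)
    = quadform A y * (4 * r * (\<Sum>(\<beta>, c, d)\<in>T. \<beta> * ((\<beta> - 1) * rho_term (\<beta> - 2) c d r v))
        + (2 * real CARD('n) + 8) * (\<Sum>(\<beta>, c, d)\<in>T. \<beta> * rho_term (\<beta> - 1) c d r v)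
        + (\<Sum>(\<beta>, c, d)\<in>T. 2*\<beta> * rho_term (\<beta> - 1) c d r v
            + 4*\<beta>*(\<beta> - 1)*(v + 1)^2 * rho_term (\<beta> - 2) c d r v + 4*\<beta>*(v + 1) * rho_term (\<beta> - 1) 0 c r v))"
    unfolding r_def
  proof (rule laplacian_quadform_mult_profile[OF assms(1)])
    show "((\<lambda>p. \<Sum>(\<beta>, c, d)\<in>T. rho_term \<beta> c d p v) has_real_derivative
        (\<Sum>(\<beta>, c, d)\<in>T. \<beta> * rho_term (\<beta> - 1) c d p v)) (at p)" if "0 \<le> p" for p
      using pos[OF that assms(3)] by (intro DERIV_sum) (auto intro: rho_term_has_derivative_r)
    show "((\<lambda>p. \<Sum>(\<beta>, c, d)\<in>T. \<beta> * rho_term (\<beta> - 1) c d p v) has_real_derivative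
        (\<Sum>(\<beta>, c, d)\<in>T. \<beta> * ((\<beta> - 1) * rho_term (\<beta> - 2) c d p v))) (at p)" if "0 \<le> p" for p
      using pos[OF that assms(3)] rho_term_has_derivative_r[of p v "_ - 1"]
      by (intro DERIV_sum) (auto intro: DERIV_cmult simp: diff_diff_eq)
    have "\<forall>\<^sub>F w in nhds v. -1 < w"
      by (rule order_tendstoD(1)[OF filterlim_ident assms(3)])
    then show "\<forall>\<^sub>F w in nhds v. ((\<lambda>w. \<Sum>(\<beta>, c, d)\<in>T. rho_term \<beta> c d (norm y^2) w) has_real_derivative
        (\<Sum>(\<beta>, c, d)\<in>T. 2*\<beta>*(w + 1) * rho_term (\<beta> - 1) c d (norm y^2) w + rho_term \<beta> 0 c (norm y^2) w)) (at w)"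
      by (rule eventually_mono) (intro DERIV_sum, auto intro!: rho_term_has_derivative_w pos)
    show "((\<lambda>w. \<Sum>(\<beta>, c, d)\<in>T. 2*\<beta>*(w + 1) * rho_term (\<beta> - 1) c d (norm y^2) w + rho_term \<beta> 0 c (norm y^2) w)
        has_real_derivative (\<Sum>(\<beta>, c, d)\<in>T. 2*\<beta> * rho_term (\<beta> - 1) c d (norm y^2) v
            + 4*\<beta>*(\<beta> - 1)*(v + 1)^2 * rho_term (\<beta> - 2) c d (norm y^2) v
            + 4*\<beta>*(v + 1) * rho_term (\<beta> - 1) 0 c (norm y^2) v)) (at v)"
      using pos[OF _ assms(3)] by (intro DERIV_sum) (auto intro: rho_term_has_second_derivative_w)
  qed
  also have "\<dots> = quadform A y * (\<Sum>(\<beta>, c, d)\<in>T.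
        2*\<beta>*((2*\<beta> + real CARD('n) + 3)*(c * v + d) + 2*c*(v + 1)) * (r + (v + 1)^2) powr (\<beta> - 1))"
    using rho_term_radial_identity[OF pos[OF _ assms(3)]]
    by (simp add: sum_distrib_left sum.distrib[symmetric] split_def r_def)
  finally show ?thesis
    by (simp add: r_def)
qed

lemma pdiff_pdiff_radial:
  fixes f :: "(real^'n::finite) \<times> real \<Rightarrow> real" and G G' G'' :: "real \<Rightarrow> real"
  assumes f: "\<And>x. f (x, v) = G (norm x^2)"
    and G: "\<And>p. 0 \<le> p \<Longrightarrow> (G has_real_derivative G' p) (at p)"
    and G': "\<And>p. 0 \<le> p \<Longrightarrow> (G' has_real_derivative G'' p) (at p)"
  shows "pdiff (pdiff f (ebar j)) (ebar i) (y, v)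
    = 4 * y$i * y$j * G'' (norm y^2) + (if i = j then 2 * G' (norm y^2) else 0)"
proof -
  have first: "pdiff f (ebar j) (x, v) = 2 * x$j * G' (norm x^2)" for x
  proof -
    have "(\<lambda>t. f ((x, v) + t *\<^sub>R ebar j)) = (\<lambda>t. G (norm x^2 + 2*t*x$j + t^2))"
      by (simp add: ebar_def f norm_add_scaleR_axis_power2)
    moreover have "((\<lambda>t. G (norm x^2 + 2*t*x$j + t^2)) has_real_derivative G' (norm x^2) * (2*x$j + 2*0)) (at 0)"
      using G by (intro DERIV_comp_quadratic) simp
    ultimately show ?thesis
      unfolding pdiff_def by (simp add: DERIV_imp_deriv)
  qed
  have "(y, v) + t *\<^sub>R ebar i = (y + t *\<^sub>R axis i 1, v)" for t
    by (simp add: ebar_def)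
  moreover have "(y + t *\<^sub>R axis i 1)$j = y$j + (if i = j then t else 0)" for t
    by (simp add: axis_def)
  ultimately have "(\<lambda>t. pdiff f (ebar j) ((y, v) + t *\<^sub>R ebar i))
      = (\<lambda>t. 2 * (y$j + (if i = j then t else 0)) * G' (norm y^2 + 2*t*y$i + t^2))"
    by (simp add: first norm_add_scaleR_axis_power2)
  moreover have "((\<lambda>t. 2 * (y$j + (if i = j then t else 0)) * G' (norm y^2 + 2*t*y$i + t^2))
      has_real_derivative 4 * y$i * y$j * G'' (norm y^2) + (if i = j then 2 * G' (norm y^2) else 0)) (at 0)"
  proof -
    have "((\<lambda>t. G' (norm y^2 + 2*t*y$i + t^2)) has_real_derivative G'' (norm y^2) * (2*y$i + 2*0)) (at 0)"
      using G' by (intro DERIV_comp_quadratic) simp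
    then show ?thesis
      by (cases "i = j") (rule derivative_eq_intros refl | simp)+
  qed
  ultimately show ?thesis
    unfolding pdiff_def[of "pdiff f (ebar j)"] by (simp add: DERIV_imp_deriv)
qed

lemma Phi_eq_quadform_mult_rho_terms:
  fixes \<pi> :: "real^'n::finite^'n"
  defines "N \<equiv> real CARD('n) + 1"
  shows "Phi \<epsilon> \<pi> a1 a2 = (\<lambda>z. quadform \<pi> (fst z) *
    (\<Sum>(\<beta>, c, d)\<in>{(- N/2, \<epsilon>*(N - 2)/2, - \<epsilon>*(N - 2)/2), (- N/2 - 2, \<epsilon>*a1, \<epsilon>*a1), (- N/2 - 1, 0, \<epsilon>*a2)}.
      rho_term \<beta> c d (norm (fst z)^2) (snd z)))"
proof
  fix z :: "(real^'n) \<times> real"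
  obtain y w where z: "z = (y, w)"
    by (cases z)
  define \<rho> where "\<rho> = norm y^2 + (w + 1)^2"
  have "(\<Sum>(\<beta>, c, d)\<in>{(- N/2, \<epsilon>*(N - 2)/2, - \<epsilon>*(N - 2)/2), (- N/2 - 2, \<epsilon>*a1, \<epsilon>*a1), (- N/2 - 1, 0, \<epsilon>*a2)}.
      rho_term \<beta> c d (norm y^2) w)
    = \<epsilon> * ((N - 2)/2 * (w - 1) * \<rho> powr (- N/2) + a1 * (w + 1) * \<rho> powr (- N/2 - 2) + a2 * \<rho> powr (- N/2 - 1))"
    by (simp add: rho_term_def \<rho>_def field_simps)
  also have "\<dots> = \<epsilon> / \<rho> powr (N/2) * ((N - 2)/2 * (w - 1) + a1 * (w + 1) / \<rho>^2 + a2 / \<rho>)"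
  proof (cases "\<rho> = 0")
    case False
    moreover have "0 \<le> \<rho>"
      by (simp add: \<rho>_def)
    ultimately have "0 < \<rho>"
      by simp
    have lower: "\<rho> powr (- N/2 - 2) = \<rho> powr (- N/2) / \<rho>^2" "\<rho> powr (- N/2 - 1) = \<rho> powr (- N/2) / \<rho>"
      using \<open>0 < \<rho>\<close> by (subst powr_diff, simp add: powr_numeral)+
    have inverse: "\<rho> powr (- N/2) = 1 / \<rho> powr (N/2)"
      using powr_minus_divide[of \<rho> "N/2"] by simp
    show ?thesis
      unfolding lower inverse using \<open>0 < \<rho>\<close> by (simp add: field_simps)
  qed simp \<comment> \<open>at \<open>\<rho> = 0\<close> both sides vanish, as \<open>0 powr _ = 0\<close> and \<open>_ / 0 = 0\<close>\<close>
  finally show "Phi \<epsilon> \<pi> a1 a2 z = quadform \<pi> (fst z) * (\<Sum>(\<beta>, c, d)\<in>{(- N/2, \<epsilon>*(N - 2)/2, - \<epsilon>*(N - 2)/2),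
      (- N/2 - 2, \<epsilon>*a1, \<epsilon>*a1), (- N/2 - 1, 0, \<epsilon>*a2)}. rho_term \<beta> c d (norm (fst z)^2) (snd z))"
    unfolding z by (simp add: Phi_def Let_def quadform_def \<rho>_def N_def mult_ac)
qed

lemma laplacian_Phi:
  fixes \<pi> :: "real^'n::finite^'n"
  assumes "trace \<pi> = 0" and "-1 < v"
  defines "N \<equiv> real CARD('n) + 1"
  shows "laplacian (Phi \<epsilon> \<pi> a1 a2) (y, v)
    = - 2*\<epsilon>*N*(N - 2) * v * (norm y^2 + (v + 1)^2) powr (- N/2 - 1) * quadform \<pi> y"
proof -
  define F where "F \<beta> c d = 2*\<beta>*((2*\<beta> + real CARD('n) + 3)*(c * v + d) + 2*c*(v + 1))
    * (norm y^2 + (v + 1)^2) powr (\<beta> - 1)" for \<beta> c d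
  have "laplacian (Phi \<epsilon> \<pi> a1 a2) (y, v) = quadform \<pi> y *
      (\<Sum>(\<beta>, c, d)\<in>{(- N/2, \<epsilon>*(N - 2)/2, - \<epsilon>*(N - 2)/2), (- N/2 - 2, \<epsilon>*a1, \<epsilon>*a1), (- N/2 - 1, 0, \<epsilon>*a2)}.
        F \<beta> c d)"
    unfolding Phi_eq_quadform_mult_rho_terms F_def N_def
    using assms(1,2) by (intro laplacian_quadform_mult_rho_terms) simp_all
  also have "\<dots> = quadform \<pi> y * (F (- N/2) (\<epsilon>*(N - 2)/2) (- \<epsilon>*(N - 2)/2)
      + F (- N/2 - 2) (\<epsilon>*a1) (\<epsilon>*a1) + F (- N/2 - 1) 0 (\<epsilon>*a2))"
    by simp
  also have "F (- N/2 - 2) (\<epsilon>*a1) (\<epsilon>*a1) = 0"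
    by (simp add: F_def N_def field_simps)
  also have "F (- N/2 - 1) 0 (\<epsilon>*a2) = 0"
    by (simp add: F_def N_def field_simps)
  also have "F (- N/2) (\<epsilon>*(N - 2)/2) (- \<epsilon>*(N - 2)/2)
      = - 2*\<epsilon>*N*(N - 2) * v * (norm y^2 + (v + 1)^2) powr (- N/2 - 1)"
    by (simp add: F_def N_def field_simps)
  finally show ?thesis
    by simp
qed

lemma sum_pdiff_pdiff_W10:
  fixes A :: "real^'n::finite^'n"
  assumes "trace A = 0" and "-1 < v"
  defines "N \<equiv> real CARD('n) + 1"
  shows "(\<Sum>i\<in>UNIV. \<Sum>j\<in>UNIV. A$i$j * pdiff (pdiff W10 (ebar j)) (ebar i) (y, v))
    = N*(N - 2) * (norm y^2 + (v + 1)^2) powr (- N/2 - 1) * quadform A y"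
proof -
  define \<beta> where "\<beta> = - (N - 2) / 2"
  define G' where "G' p = \<beta> * rho_term (\<beta> - 1) 0 1 p v" for p
  define G'' where "G'' p = \<beta> * ((\<beta> - 1) * rho_term (\<beta> - 2) 0 1 p v)" for p
  have pos: "0 < p + (v + 1)^2" if "0 \<le> p" for p
    using that assms(2) by (auto intro!: add_nonneg_pos)
  have hessian: "pdiff (pdiff W10 (ebar j)) (ebar i) (y, v)
      = 4 * y$i * y$j * G'' (norm y^2) + (if i = j then 2 * G' (norm y^2) else 0)" for i j
  proof (rule pdiff_pdiff_radial[where G = "\<lambda>p. rho_term \<beta> 0 1 p v"])
    show "W10 (x, v) = rho_term \<beta> 0 1 (norm x^2) v" for x :: "real^'n"
      by (simp add: W10_def rho_term_def \<beta>_def N_def)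
    show "((\<lambda>p. rho_term \<beta> 0 1 p v) has_real_derivative G' p) (at p)" if "0 \<le> p" for p
      unfolding G'_def using pos[OF that] by (rule rho_term_has_derivative_r)
    show "(G' has_real_derivative G'' p) (at p)" if "0 \<le> p" for p
      unfolding G'_def G''_def using rho_term_has_derivative_r[OF pos[OF that], of "\<beta> - 1"]
      by (simp add: DERIV_cmult)
  qed
  have "A$i$j * pdiff (pdiff W10 (ebar j)) (ebar i) (y, v)
      = 4 * G'' (norm y^2) * (A$i$j * y$i * y$j) + (if i = j then 2 * G' (norm y^2) * A$i$j else 0)" for i j
    unfolding hessian by (simp add: algebra_simps)
  then have "(\<Sum>i\<in>UNIV. \<Sum>j\<in>UNIV. A$i$j * pdiff (pdiff W10 (ebar j)) (ebar i) (y, v))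
      = 4 * G'' (norm y^2) * quadform A y + 2 * G' (norm y^2) * trace A"
    by (simp add: quadform_def trace_def sum.distrib sum_distrib_left)
  moreover have "\<beta> - 2 = - N/2 - 1"
    by (simp add: \<beta>_def field_simps)
  then have "4 * G'' (norm y^2) = N*(N - 2) * (norm y^2 + (v + 1)^2) powr (- N/2 - 1)"
    unfolding G''_def rho_term_def by (simp add: \<beta>_def field_simps)
  ultimately show ?thesis
    using assms(1) by simp
qed

theorem lemma4p3:
  fixes \<epsilon> a1 a2 :: real and \<pi> :: "real^'n::finite^'n"
    and xb :: "real^'n" and xN :: real
  assumes "CARD('n) + 1 \<ge> 4"
    and "\<epsilon> > 0"
    and "transpose \<pi> = \<pi>"
    and "trace \<pi> = 0"
    and "xN > 0"
  shows "- laplacian (Phi \<epsilon> \<pi> a1 a2) (xb, xN)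
         = 2 * \<epsilon> * (\<Sum>i\<in>UNIV. \<Sum>j\<in>UNIV.
              \<pi> $ i $ j * xN * pdiff (\<lambda>y. pdiff W10 (ebar j) y) (ebar i) (xb, xN))"
proof -
  \<comment> \<open>only trace-freeness of \<open>\<pi>\<close> and \<open>xN > -1\<close> are used\<close>
  have "-1 < xN"
    using assms(5) by simp
  moreover have "(\<Sum>i\<in>UNIV. \<Sum>j\<in>UNIV. \<pi> $ i $ j * xN * pdiff (pdiff W10 (ebar j)) (ebar i) (xb, xN))
      = xN * (\<Sum>i\<in>UNIV. \<Sum>j\<in>UNIV. \<pi> $ i $ j * pdiff (pdiff W10 (ebar j)) (ebar i) (xb, xN))"
    by (simp add: sum_distrib_left mult_ac)
  ultimately show ?thesis
    using laplacian_Phi[OF assms(4)] sum_pdiff_pdiff_W10[OF assms(4)] by simp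
qed

end
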